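(* Let $q\geq 2$ and $k$ be relatively prime natural numbers, and let $r$ be the order of $q$ in $(\mathbb{Z}/k\mathbb{Z})^\times$. For any $u\in\mathbb{N}$ relatively prime to $r$, there exists a natural number $k'$ such that $k\mid k'$ and $\gamma_{q^u}(k')=\gamma_q(k)$.
   Context: For an integer $b\geq 2$, $\gamma_b(m)$ denotes the sum of the digits of the base-$b$ expansion of the natural number $m$. *)

theory Defs
  imports "HOL-Number_Theory.Number_Theory"
begin

fun digit_sum :: "nat \<Rightarrow> nat \<Rightarrow> nat" where
  "digit_sum b m = (if b < 2 \<or> m = 0 then 0 else m mod b + digit_sum b (m div b))"

end

theory Submission
  imports Defs
begin

text \<open>Write k in base q with digits a_i and choose w \<ge> 1 with u w \<equiv> 1 modulo the order of q,
  so that W = (q^u)^w \<equiv> q (mod k). Reading the digits a_i in base W instead of q gives a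
  number k' \<equiv> k (mod k); since every a_i < q \<le> q^u, the base-q^u expansion of k' consists of
  the digits a_i padded by zeros, hence has the same digit sum as k in base q.\<close>

declare digit_sum.simps [simp del]

lemma digit_sum_0 [simp]: "digit_sum b 0 = 0"
  by (simp add: digit_sum.simps)

lemma digit_sum_mod_div:
  "b \<ge> 2 \<Longrightarrow> digit_sum b m = m mod b + digit_sum b (m div b)"
  by (cases "m = 0") (simp, subst digit_sum.simps, simp)

lemma digit_sum_less_base:
  "b \<ge> 2 \<Longrightarrow> c < b \<Longrightarrow> digit_sum b c = c"
  by (simp add: digit_sum_mod_div[of b c])

lemma digit_sum_add_mult_power:
  assumes "b \<ge> 2" "a < b ^ p"
  shows "digit_sum b (a + b ^ p * m) = digit_sum b a + digit_sum b m"
  using assms(2)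
proof (induction p arbitrary: a)
  case 0
  then show ?case by simp
next
  case (Suc p)
  have "a < b ^ p * b"
    using Suc.prems by (simp add: mult.commute)
  then have "a div b < b ^ p"
    by (rule less_mult_imp_div_less)
  have "digit_sum b (a + b ^ Suc p * m) = digit_sum b (a + b * (b ^ p * m))"
    by (simp add: mult.assoc)
  also have "\<dots> = a mod b + digit_sum b (a div b + b ^ p * m)"
    using assms(1) by (subst digit_sum_mod_div[OF assms(1)]) (simp add: add.commute)
  also have "\<dots> = a mod b + digit_sum b (a div b) + digit_sum b m"
    using Suc.IH[OF \<open>a div b < b ^ p\<close>] by simp
  also have "a mod b + digit_sum b (a div b) = digit_sum b a"
    using digit_sum_mod_div[OF assms(1), of a] by simp
  finally show ?case .
qed

fun rebase :: "nat \<Rightarrow> nat \<Rightarrow> nat \<Rightarrow> nat" where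
  "rebase q W m = (if q < 2 \<or> m = 0 then 0 else m mod q + W * rebase q W (m div q))"

declare rebase.simps [simp del]

lemma rebase_0 [simp]: "rebase q W 0 = 0"
  by (simp add: rebase.simps)

lemma rebase_mod_div:
  "q \<ge> 2 \<Longrightarrow> rebase q W m = m mod q + W * rebase q W (m div q)"
  by (cases "m = 0") (simp_all add: rebase.simps)

lemma digit_sum_rebase_power:
  assumes "q \<ge> 2" "q \<le> Q" "w \<ge> 1"
  shows "digit_sum Q (rebase q (Q ^ w) m) = digit_sum q m"
proof (induction m rule: less_induct)
  case (less m)
  show ?case
  proof (cases "m = 0")
    case True
    then show ?thesis by simp
  next
    case False
    have "m mod q < q"
      using assms(1) by simp
    then have "Q \<ge> 2" and digit: "m mod q < Q"
      using assms(1,2) by linarith+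
    moreover have "Q \<le> Q ^ w"
      using assms by (intro self_le_power) auto
    ultimately have "m mod q < Q ^ w"
      by linarith
    have "digit_sum Q (rebase q (Q ^ w) m)
        = digit_sum Q (m mod q + Q ^ w * rebase q (Q ^ w) (m div q))"
      using assms(1) by (simp add: rebase_mod_div[of q "Q ^ w" m])
    also have "\<dots> = m mod q + digit_sum q (m div q)"
      using False assms(1) less.IH[of "m div q"]
      by (simp add: digit_sum_add_mult_power[OF \<open>Q \<ge> 2\<close> \<open>m mod q < Q ^ w\<close>]
          digit_sum_less_base[OF \<open>Q \<ge> 2\<close> digit])
    also have "\<dots> = digit_sum q m"
      using digit_sum_mod_div[OF assms(1), of m] by simp
    finally show ?thesis .
  qed
qed

lemma cong_rebase:
  assumes "q \<ge> 2" "[W = q] (mod k)"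
  shows "[rebase q W m = m] (mod k)"
proof (induction m rule: less_induct)
  case (less m)
  show ?case
  proof (cases "m = 0")
    case True
    then show ?thesis by simp
  next
    case False
    have "[m mod q + W * rebase q W (m div q) = m mod q + q * (m div q)] (mod k)"
      using less.IH[of "m div q"] False assms by (intro cong_add cong_mult) auto
    then show ?thesis
      using assms(1) by (simp add: rebase_mod_div[of q W m])
  qed
qed

lemma ex_power_power_cong_self:
  fixes q k u :: nat
  assumes "coprime k q" "coprime u (ord k q)"
  shows "\<exists>w\<ge>1. [(q ^ u) ^ w = q] (mod k)"
proof -
  obtain v where v: "[u * v = 1] (mod ord k q)"
    using cong_solve_coprime_nat assms(2) by auto
  \<comment> \<open>Shifting v by the order keeps the congruence and makes the exponent positive.\<close>
  have "[u * (v + ord k q) = u * v] (mod ord k q)"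
    by (simp add: algebra_simps cong_def)
  with v have "[u * (v + ord k q) = 1] (mod ord k q)"
    using cong_trans by blast
  then have "[q ^ (u * (v + ord k q)) = q ^ 1] (mod k)"
    using order_divides_expdiff[OF assms(1)] by blast
  moreover have "v + ord k q \<ge> 1"
    using assms(1) by (simp add: Suc_leI)
  ultimately show ?thesis
    by (auto simp: power_mult)
qed

theorem lemma3:
  fixes q k u :: nat
  assumes "q \<ge> 2" and "coprime q k" and "u \<ge> 1" and "coprime u (ord k q)"
  shows "\<exists>k'::nat. k dvd k' \<and> digit_sum (q ^ u) k' = digit_sum q k"
proof -
  obtain w where "w \<ge> 1" and w: "[(q ^ u) ^ w = q] (mod k)"
    using ex_power_power_cong_self assms(2,4) by (metis coprime_commute)
  have "q \<le> q ^ u"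
    using assms(1,3) by (intro self_le_power) auto
  let ?k' = "rebase q ((q ^ u) ^ w) k"
  have "k dvd ?k'"
    using cong_rebase[OF assms(1) w, of k] by (simp add: cong_0_iff[symmetric] cong_def)
  moreover have "digit_sum (q ^ u) ?k' = digit_sum q k"
    by (rule digit_sum_rebase_power[OF assms(1) \<open>q \<le> q ^ u\<close> \<open>w \<ge> 1\<close>])
  ultimately show ?thesis
    by blast
qed

end
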